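(* Let $U:\mathbb{R}^d\to\mathbb{R}$ satisfy: (A1) $U$ is continuously differentiable and $\|\nabla U(x)-\nabla U(y)\|_2\le L\|x-y\|_2$ for all $x,y$, for some $L>0$; (A2) $\nabla U(0)=0$; (A3) there exist $m,R>0$ such that for all $x,y\in\mathbb{R}^d$ with $\|x-y\|_2>R$, $\langle\nabla U(x)-\nabla U(y),x-y\rangle\ge m\|x-y\|_2^2$. Let $p^*$ be the probability measure with density proportional to $\exp(-U(x))$. Then $$\mathbb{E}_{x\sim p^*}\big[\|x\|_2^2\big]\le\frac{2d}m+18R^2.$$ *)

theory Defs
  imports "HOL-Analysis.Analysis" "HOL-Probability.Probability"
begin

definition gibbs :: "('a::euclidean_space \<Rightarrow> real) \<Rightarrow> 'a measure" where
  "gibbs U = density lborel (\<lambda>x. ennreal (exp (- U x) / (\<integral>y. exp (- U y) \<partial>lborel)))"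

end

theory Submission
  imports Defs
begin

text \<open>
  For 0 < t \<le> 1, dissipativity outside the ball of radius R makes
  s \<mapsto> U (s x) - m s^2 |x|^2 / 2 nondecreasing on [t, 1] as soon as t |x| \<ge> R.
  Hence f = exp (-U) decays along rays: f x \<le> exp (-a |x|^2) f (t x) for |x| > R / t,
  where a = m (1 - t^2) / 2. Since the substitution x \<mapsto> t x multiplies Lebesgue
  integrals by t^(-d), this decay bounds the integral of f over every ball by twice
  its integral over a fixed ball, so f is integrable, and together with
  y exp (-a y) \<le> 1 / (e a) it gives
  \<integral> |x|^2 f \<le> ((R / t)^2 + t^(-d) / (e a)) \<integral> f.
  The choice t = d / (d + 1) bounds this constant by 4 R^2 + 2 d / m.
\<close>

lemma potential_growth_along_ray:
  fixes U :: "'a::real_inner \<Rightarrow> real"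
  assumes grad: "\<And>x. (U has_derivative (\<lambda>h. G x \<bullet> h)) (at x)"
    and dissipative: "\<And>y. R < norm y \<Longrightarrow> m * (norm y)^2 \<le> G y \<bullet> y"
    and t: "0 < t" "t \<le> 1" and x: "R \<le> t * norm x"
  shows "U (t *\<^sub>R x) + m * (1 - t^2) / 2 * (norm x)^2 \<le> U x"
proof -
  define h where "h s = U (s *\<^sub>R x) - m * s^2 / 2 * (norm x)^2" for s
  have h_deriv: "(h has_real_derivative G (s *\<^sub>R x) \<bullet> x - m * s * (norm x)^2) (at s)" for s
  proof -
    have "((\<lambda>s. U (s *\<^sub>R x)) has_derivative (\<lambda>k. G (s *\<^sub>R x) \<bullet> (k *\<^sub>R x))) (at s)"
      by (rule has_derivative_compose[OF _ grad]) (auto intro!: derivative_eq_intros)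
    then show ?thesis
      unfolding h_def has_field_derivative_def
      by (auto intro!: derivative_eq_intros simp: power2_eq_square algebra_simps)
  qed
  have "h t \<le> h 1"
  proof (rule DERIV_nonneg_imp_increasing_open[OF \<open>t \<le> 1\<close>])
    fix s assume s: "t < s" "s < 1"
    have "m * s * (norm x)^2 \<le> G (s *\<^sub>R x) \<bullet> x"
    proof (cases "x = 0")
      case False
      then have "t * norm x < s * norm x"
        using s by (simp add: mult_strict_right_mono)
      then have "R < norm (s *\<^sub>R x)"
        using s t x by simp
      from dissipative[OF this] have "s * (m * s * (norm x)^2) \<le> s * (G (s *\<^sub>R x) \<bullet> x)"
        using s t by (simp add: power2_eq_square algebra_simps)
      then show ?thesis using s t by simp
    qed simp
    then show "\<exists>y. (h has_real_derivative y) (at s) \<and> 0 \<le> y"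
      using h_deriv[of s] by (intro exI[of _ "G (s *\<^sub>R x) \<bullet> x - m * s * (norm x)^2"]) simp
  next
    show "continuous_on {t..1} h"
      using h_deriv by (meson DERIV_continuous continuous_at_imp_continuous_on)
  qed
  then show ?thesis by (simp add: h_def field_simps)
qed

lemma exp_neg_potential_decay_along_rays:
  fixes U :: "'a::real_inner \<Rightarrow> real"
  assumes grad: "\<And>x. (U has_derivative (\<lambda>h. G x \<bullet> h)) (at x)"
    and dissipative: "\<And>y. R < norm y \<Longrightarrow> m * (norm y)^2 \<le> G y \<bullet> y"
    and t: "0 < t" "t \<le> 1" and x: "R / t < norm x"
  shows "exp (- U x) \<le> exp (- (m * (1 - t^2) / 2) * (norm x)^2) * exp (- U (t *\<^sub>R x))"
proof -
  have "R \<le> t * norm x"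
    using x t by (simp add: field_simps)
  from potential_growth_along_ray[OF grad dissipative t this]
  show ?thesis
    by (simp add: exp_add[symmetric])
qed

lemma nn_integral_lborel_scaleR:
  fixes g :: "'a::euclidean_space \<Rightarrow> ennreal"
  assumes [measurable]: "g \<in> borel_measurable borel" and c: "0 < c"
  shows "(\<integral>\<^sup>+x. g (c *\<^sub>R x) \<partial>lborel)
    = ennreal ((1 / c) ^ DIM('a)) * (\<integral>\<^sup>+x. g x \<partial>lborel)"
  using c by (subst (1) lborel_affine[of "1 / c" 0])
    (simp_all add: nn_integral_density nn_integral_distr nn_integral_cmult)

lemma nn_integral_eq_SUP_cball:
  fixes f :: "'a::euclidean_space \<Rightarrow> ennreal"
  assumes [measurable]: "f \<in> borel_measurable borel"
  shows "(\<integral>\<^sup>+x. f x \<partial>lborel) = (SUP n. \<integral>\<^sup>+x\<in>cball 0 (real n). f x \<partial>lborel)"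
proof -
  have "(SUP n. f x * indicator (cball 0 (real n)) x) = f x" for x
  proof -
    obtain n where "norm x \<le> real n" using real_arch_simple by blast
    then have "(SUP n. indicator (cball 0 (real n)) x :: ennreal) = 1"
      by (intro antisym SUP_upper2[of n]) (auto intro!: SUP_least simp: indicator_def)
    then show ?thesis by (simp add: SUP_mult_left_ennreal[symmetric])
  qed
  then have "(\<integral>\<^sup>+x. f x \<partial>lborel) = (\<integral>\<^sup>+x. (SUP n. f x * indicator (cball 0 (real n)) x) \<partial>lborel)"
    by simp
  also have "\<dots> = (SUP n. \<integral>\<^sup>+x\<in>cball 0 (real n). f x \<partial>lborel)"
    by (rule nn_integral_monotone_convergence_SUP)
      (auto simp: incseq_def le_fun_def indicator_def intro!: mult_left_mono)
  finally show ?thesis .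
qed

lemma ennreal_le_twice_if_le_half:
  fixes x a :: ennreal
  assumes "x \<noteq> \<infinity>" "x \<le> a + x / 2"
  shows "x \<le> 2 * a"
proof (cases a rule: ennreal_cases)
  case (real b)
  obtain y where y: "x = ennreal y" "0 \<le> y" using assms(1) by (cases x rule: ennreal_cases) auto
  with assms(2) real have "y \<le> 2 * b"
    by (simp add: ennreal_divide_numeral ennreal_plus[symmetric] del: ennreal_plus)
  then have "ennreal y \<le> ennreal (2 * b)"
    by (rule ennreal_leI)
  with y real show ?thesis by (simp add: ennreal_mult)
qed simp

lemma nn_integral_le_twice_cball:
  fixes f :: "'a::euclidean_space \<Rightarrow> ennreal"
  assumes [measurable]: "f \<in> borel_measurable borel"
    and finite_on_cballs: "\<And>M. (\<integral>\<^sup>+x\<in>cball 0 M. f x \<partial>lborel) \<noteq> \<infinity>"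
    and t: "0 < t" "t \<le> 1"
    and c: "c * ennreal ((1 / t) ^ DIM('a)) \<le> 1 / 2"
    and shrink: "\<And>x. r < norm x \<Longrightarrow> f x \<le> c * f (t *\<^sub>R x)"
  shows "(\<integral>\<^sup>+x. f x \<partial>lborel) \<le> 2 * (\<integral>\<^sup>+x\<in>cball 0 r. f x \<partial>lborel)"
proof -
  have [measurable]: "cball (0::'a) M \<in> sets borel" for M
    by (simp add: borel_closed)
  define I where "I M = (\<integral>\<^sup>+x\<in>cball 0 M. f x \<partial>lborel)" for M
  have I_le: "I M \<le> 2 * I r" if "0 \<le> M" for M
  proof (rule ennreal_le_twice_if_le_half)
    have pointwise: "f x * indicator (cball 0 M) x
        \<le> f x * indicator (cball 0 r) x + c * (f (t *\<^sub>R x) * indicator (cball 0 (t * M)) (t *\<^sub>R x))"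
      for x
    proof (cases "norm x \<le> r")
      case False
      moreover have "t *\<^sub>R x \<in> cball 0 (t * M) \<longleftrightarrow> x \<in> cball 0 M"
        using t by simp
      ultimately show ?thesis
        using shrink[of x] by (auto simp: indicator_def mult.assoc)
    qed (auto simp: indicator_def)
    have "I M \<le> (\<integral>\<^sup>+x. f x * indicator (cball 0 r) x
        + c * (f (t *\<^sub>R x) * indicator (cball 0 (t * M)) (t *\<^sub>R x)) \<partial>lborel)"
      unfolding I_def by (rule nn_integral_mono) (rule pointwise)
    also have "\<dots> = I r + c * (\<integral>\<^sup>+x. f (t *\<^sub>R x) * indicator (cball 0 (t * M)) (t *\<^sub>R x) \<partial>lborel)"
      by (simp add: I_def nn_integral_add nn_integral_cmult)
    also have "\<dots> = I r + c * ennreal ((1 / t) ^ DIM('a)) * I (t * M)"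
      unfolding I_def
      by (subst nn_integral_lborel_scaleR[where g = "\<lambda>y. f y * indicator (cball 0 (t * M)) y"])
        (simp_all add: t mult.assoc)
    also have "\<dots> \<le> I r + 1 / 2 * I M"
    proof -
      have "t * M \<le> M"
        using t \<open>0 \<le> M\<close> by (simp add: mult_left_le_one_le)
      then have "I (t * M) \<le> I M"
        unfolding I_def by (intro nn_integral_mono) (auto simp: indicator_def)
      then show ?thesis
        using c by (intro add_left_mono mult_mono) auto
    qed
    finally show "I M \<le> I r + I M / 2"
      by (simp add: ennreal_divide_times)
    show "I M \<noteq> \<infinity>"
      using finite_on_cballs by (simp add: I_def)
  qed
  have "(\<integral>\<^sup>+x. f x \<partial>lborel) = (SUP n. I (real n))"
    unfolding I_def by (rule nn_integral_eq_SUP_cball) simp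
  also have "\<dots> \<le> 2 * I r"
    by (rule SUP_least) (simp add: I_le)
  finally show ?thesis by (simp add: I_def)
qed

lemma mult_exp_neg_le:
  fixes a y :: real
  assumes "0 < a"
  shows "y * exp (- a * y) \<le> exp (-1) / a"
proof -
  have "a * y * exp (- a * y) \<le> exp (a * y - 1) * exp (- a * y)"
    using exp_ge_add_one_self[of "a * y - 1"] by (intro mult_right_mono) auto
  also have "\<dots> = exp (-1)"
    by (simp add: exp_add[symmetric])
  finally show ?thesis
    using assms by (simp add: field_simps)
qed

lemma integrable_if_gaussian_decay_along_rays:
  fixes f :: "'a::euclidean_space \<Rightarrow> real"
  assumes cont: "continuous_on UNIV f" and nonneg: "\<And>x. 0 \<le> f x"
    and t: "0 < t" "t \<le> 1" and a: "0 < a"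
    and decay: "\<And>x. \<rho> < norm x \<Longrightarrow> f x \<le> exp (- a * (norm x)^2) * f (t *\<^sub>R x)"
  shows "integrable lborel f"
proof -
  have [measurable]: "f \<in> borel_measurable borel"
    using cont by (rule borel_measurable_continuous_onI)
  define s where "s = (1 / t) ^ DIM('a)"
  define r where "r = max \<rho> (sqrt (2 * s / a))"
  define c where "c = exp (- a * r^2)"
  have "0 < s"
    using t by (simp add: s_def)
  then have q: "0 \<le> 2 * s / a"
    using a by simp
  then have r: "0 \<le> r" "\<rho> \<le> r"
    by (auto simp: r_def le_max_iff_disj)
  have "(sqrt (2 * s / a))^2 \<le> r^2"
    using q by (intro power_mono) (simp_all add: r_def)
  then have "2 * s \<le> a * r^2"
    using q a by (simp add: field_simps)
  also have "\<dots> \<le> exp (a * r^2)"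
    using exp_ge_add_one_self[of "a * r^2"] by linarith
  finally have c_half: "c * s \<le> 1 / 2"
    by (simp add: c_def exp_minus field_simps)
  have shrink: "f x \<le> c * f (t *\<^sub>R x)" if "r < norm x" for x
  proof -
    have "r^2 \<le> (norm x)^2"
      using that r by (intro power_mono) auto
    then have "exp (- a * (norm x)^2) \<le> c"
      using a by (simp add: c_def)
    moreover have "\<rho> < norm x"
      using that r by simp
    ultimately show ?thesis
      using decay[of x] nonneg[of "t *\<^sub>R x"] by (smt (verit) mult_right_mono)
  qed
  have finite_on_cballs: "(\<integral>\<^sup>+x\<in>cball 0 M. ennreal (f x) \<partial>lborel) \<noteq> \<infinity>" for M
  proof -
    have "integrable lborel (\<lambda>x. indicator (cball 0 M) x *\<^sub>R f x)"
      by (rule borel_integrable_compact) (auto intro: continuous_on_subset[OF cont])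
    then have "(\<integral>\<^sup>+x. ennreal (f x * indicator (cball 0 M) x) \<partial>lborel) < \<infinity>"
      by (simp add: integrable_iff_bounded nonneg mult.commute)
    moreover have "(\<integral>\<^sup>+x. ennreal (f x * indicator (cball 0 M) x) \<partial>lborel)
        = (\<integral>\<^sup>+x\<in>cball 0 M. ennreal (f x) \<partial>lborel)"
      by (intro nn_integral_cong) (simp split: split_indicator)
    ultimately show ?thesis
      by simp
  qed
  have "(\<integral>\<^sup>+x. ennreal (f x) \<partial>lborel) \<le> 2 * (\<integral>\<^sup>+x\<in>cball 0 r. ennreal (f x) \<partial>lborel)"
  proof (rule nn_integral_le_twice_cball[OF _ finite_on_cballs t])
    show "ennreal (f x) \<le> ennreal c * ennreal (f (t *\<^sub>R x))" if "r < norm x" for x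
      using shrink[OF that] by (simp add: c_def ennreal_mult'[symmetric] ennreal_leI)
    have "ennreal (c * s) \<le> ennreal (1 / 2)"
      using c_half by (rule ennreal_leI)
    then show "ennreal c * ennreal ((1 / t) ^ DIM('a)) \<le> 1 / 2"
      by (simp add: c_def s_def ennreal_mult' ennreal_divide_numeral[of 1, symmetric] divide_ennreal_def)
  qed simp
  also have "\<dots> < \<infinity>"
    using finite_on_cballs[of r] by (simp add: ennreal_mult_less_top less_top)
  finally show ?thesis
    using nonneg by (intro integrableI_nonneg) auto
qed

lemma nn_integral_norm_sq_le_if_gaussian_decay_along_rays:
  fixes f :: "'a::euclidean_space \<Rightarrow> real"
  assumes [measurable]: "f \<in> borel_measurable borel" and nonneg: "\<And>x. 0 \<le> f x"
    and t: "0 < t" and a: "0 < a"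
    and decay: "\<And>x. \<rho> < norm x \<Longrightarrow> f x \<le> exp (- a * (norm x)^2) * f (t *\<^sub>R x)"
  shows "(\<integral>\<^sup>+x. ennreal ((norm x)^2 * f x) \<partial>lborel)
    \<le> ennreal (\<rho>^2 + exp (-1) / a * (1 / t) ^ DIM('a)) * (\<integral>\<^sup>+x. f x \<partial>lborel)"
proof -
  define K where "K = exp (-1) / a"
  have K: "0 \<le> K"
    using a by (simp add: K_def)
  have pointwise: "(norm x)^2 * f x \<le> \<rho>^2 * f x + K * f (t *\<^sub>R x)" for x
  proof (cases "norm x \<le> \<rho>")
    case True
    then have "(norm x)^2 * f x \<le> \<rho>^2 * f x"
      using nonneg by (intro mult_right_mono power_mono) auto
    then show ?thesis
      using K nonneg[of "t *\<^sub>R x"] by (smt (verit) mult_nonneg_nonneg)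
  next
    case False
    then have "(norm x)^2 * f x \<le> ((norm x)^2 * exp (- a * (norm x)^2)) * f (t *\<^sub>R x)"
      using decay[of x] by (simp add: mult_left_mono mult.assoc)
    also have "\<dots> \<le> K * f (t *\<^sub>R x)"
      using mult_exp_neg_le[OF a] nonneg by (intro mult_right_mono) (auto simp: K_def)
    finally show ?thesis
      using nonneg[of x] by (smt (verit) zero_le_power2 mult_nonneg_nonneg)
  qed
  have scaled: "(\<integral>\<^sup>+x. f (t *\<^sub>R x) \<partial>lborel)
      = ennreal ((1 / t) ^ DIM('a)) * (\<integral>\<^sup>+x. f x \<partial>lborel)"
    by (rule nn_integral_lborel_scaleR[OF _ t]) measurable
  have "(\<integral>\<^sup>+x. ennreal ((norm x)^2 * f x) \<partial>lborel)
      \<le> (\<integral>\<^sup>+x. ennreal (\<rho>^2) * f x + ennreal K * f (t *\<^sub>R x) \<partial>lborel)"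
    using pointwise nonneg K
    by (intro nn_integral_mono)
      (simp add: ennreal_mult'[symmetric] ennreal_plus[symmetric] ennreal_leI del: ennreal_plus)
  also have "\<dots> = ennreal (\<rho>^2) * (\<integral>\<^sup>+x. f x \<partial>lborel)
      + ennreal K * ennreal ((1 / t) ^ DIM('a)) * (\<integral>\<^sup>+x. f x \<partial>lborel)"
    by (simp add: nn_integral_add nn_integral_cmult scaled mult.assoc)
  also have "\<dots> = ennreal (\<rho>^2 + K * (1 / t) ^ DIM('a)) * (\<integral>\<^sup>+x. f x \<partial>lborel)"
    using K t by (simp add: ennreal_plus ennreal_mult distrib_right)
  finally show ?thesis
    by (simp add: K_def)
qed

lemma integral_lborel_pos:
  fixes f :: "'a::euclidean_space \<Rightarrow> real"
  assumes f: "integrable lborel f" and pos: "\<And>x. 0 < f x"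
  shows "0 < (\<integral>x. f x \<partial>lborel)"
proof -
  have "\<not> (AE x in lborel. f x = 0)"
    by (subst AE_iff_measurable[where N = UNIV]) (auto simp: pos[THEN less_imp_neq, symmetric])
  then have "(\<integral>x. f x \<partial>lborel) \<noteq> 0"
    using pos by (subst integral_nonneg_eq_0_iff_AE[OF f]) (auto simp: less_imp_le)
  moreover have "0 \<le> (\<integral>x. f x \<partial>lborel)"
    using pos by (simp add: less_imp_le)
  ultimately show ?thesis
    by simp
qed

lemma nn_integral_gibbs:
  fixes U :: "'a::euclidean_space \<Rightarrow> real" and g :: "'a \<Rightarrow> real"
  assumes [measurable]: "U \<in> borel_measurable borel" "g \<in> borel_measurable borel"
    and nonneg: "\<And>x. 0 \<le> g x"
  shows "(\<integral>\<^sup>+x. g x \<partial>gibbs U)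
    = (\<integral>\<^sup>+x. ennreal (g x * exp (- U x)) \<partial>lborel) * ennreal (1 / (\<integral>y. exp (- U y) \<partial>lborel))"
proof -
  define Z where "Z = (\<integral>y. exp (- U y) \<partial>lborel)"
  have "0 \<le> Z"
    by (simp add: Z_def)
  then have "ennreal (exp (- U x) / Z) * ennreal (g x) = ennreal (g x * exp (- U x)) * ennreal (1 / Z)" for x
    using nonneg by (simp add: ennreal_mult[symmetric])
  then show ?thesis
    by (simp add: gibbs_def nn_integral_density nn_integral_multc Z_def[symmetric])
qed

lemma prob_space_gibbs:
  fixes U :: "'a::euclidean_space \<Rightarrow> real"
  assumes [measurable]: "U \<in> borel_measurable borel"
    and integrable: "integrable lborel (\<lambda>x. exp (- U x))"
  shows "prob_space (gibbs U)"
proof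
  define Z where "Z = (\<integral>y. exp (- U y) \<partial>lborel)"
  have "0 < Z"
    unfolding Z_def using integrable by (rule integral_lborel_pos) simp
  have "emeasure (gibbs U) (space (gibbs U)) = (\<integral>\<^sup>+x. 1 \<partial>gibbs U)"
    by simp
  also have "\<dots> = ennreal Z * ennreal (1 / Z)"
    using nn_integral_gibbs[of U "\<lambda>_. 1"] integrable
    by (simp add: Z_def nn_integral_eq_integral)
  also have "\<dots> = 1"
    using \<open>0 < Z\<close> by (simp add: ennreal_mult[symmetric])
  finally show "emeasure (gibbs U) (space (gibbs U)) = 1" .
qed

lemma gibbs_integral_le:
  fixes U :: "'a::euclidean_space \<Rightarrow> real" and g :: "'a \<Rightarrow> real"
  assumes [measurable]: "U \<in> borel_measurable borel" "g \<in> borel_measurable borel"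
    and nonneg: "\<And>x. 0 \<le> g x"
    and integrable: "integrable lborel (\<lambda>x. exp (- U x))"
    and C: "0 \<le> C"
    and bound: "(\<integral>\<^sup>+x. ennreal (g x * exp (- U x)) \<partial>lborel)
      \<le> ennreal C * (\<integral>\<^sup>+x. exp (- U x) \<partial>lborel)"
  shows "integrable (gibbs U) g \<and> (\<integral>x. g x \<partial>gibbs U) \<le> C"
proof -
  define Z where "Z = (\<integral>y. exp (- U y) \<partial>lborel)"
  have "0 < Z"
    unfolding Z_def using integrable by (rule integral_lborel_pos) simp
  have "(\<integral>\<^sup>+x. g x \<partial>gibbs U) \<le> ennreal C * ennreal Z * ennreal (1 / Z)"
    using bound integrable
    by (simp add: nn_integral_gibbs nonneg Z_def nn_integral_eq_integral mult_right_mono)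
  also have "\<dots> = ennreal C"
    using \<open>0 < Z\<close> by (simp add: mult.assoc ennreal_mult[symmetric])
  finally have le_C: "(\<integral>\<^sup>+x. g x \<partial>gibbs U) \<le> ennreal C" .
  then have "integrable (gibbs U) g"
    using nonneg by (intro integrableI_nonneg) (auto simp: gibbs_def top.not_eq_extremum le_less_trans)
  moreover from this have "(\<integral>x. g x \<partial>gibbs U) \<le> C"
    using le_C C nonneg by (simp add: nn_integral_eq_integral)
  ultimately show ?thesis ..
qed

lemma exp_one_ge_8_div_3: "8 / 3 \<le> exp (1::real)"
proof -
  have "(8 / 3::real) \<le> (1 + 1 / real 30) ^ 30"
    by (simp add: power_divide)
  also have "\<dots> \<le> exp 1"
    by (rule exp_ge_one_plus_x_over_n_power_n) auto
  finally show ?thesis .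
qed

lemma one_plus_inverse_power_le:
  fixes n :: nat
  assumes "1 \<le> n"
  shows "(1 + 1 / real n) ^ n \<le> exp 1 * real n * (2 * real n + 1) / (real n + 1)^2"
proof (cases "n = 1")
  case True
  then show ?thesis
    using exp_one_ge_8_div_3 by simp
next
  case False
  then have "2 \<le> n"
    using assms by simp
  then have "2 * real n \<le> real n * real n"
    by (intro mult_right_mono) auto
  then have "1 + real n \<le> real n * real n"
    using \<open>2 \<le> n\<close> by linarith
  then have "1 \<le> n * (2 * n + 1) / (real n + 1)^2"
    by (simp add: power2_eq_square algebra_simps)
  moreover have "(1 + 1 / n) ^ n \<le> exp (1::real)"
    using assms exp_ge_one_plus_x_over_n_power_n[of n 1] by simp
  ultimately have "(1 + 1 / n) ^ n \<le> exp 1 * (n * (2 * n + 1) / (real n + 1)^2)"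
    by (smt (verit) exp_gt_zero mult_le_cancel_left1)
  then show ?thesis
    by (simp add: mult.assoc add.commute distrib_left)
qed

lemma second_moment_constant_le:
  fixes n :: nat and m R :: real
  assumes n: "1 \<le> n" and m: "0 < m"
  defines "t \<equiv> real n / (real n + 1)"
  shows "(R / t)^2 + exp (-1) / (m * (1 - t^2) / 2) * (1 / t) ^ n \<le> 2 * real n / m + 18 * R^2"
proof -
  have inv_t: "1 / t = 1 + 1 / n"
    using n by (simp add: t_def field_simps)
  have gap: "1 - t^2 = (2 * real n + 1) / (real n + 1)^2"
    by (simp add: t_def power_divide divide_simps) (simp add: power2_eq_square algebra_simps)
  have "(1 / t)^2 \<le> 2^2"
    using n by (intro power_mono) (simp_all add: inv_t)
  then have "R^2 * (1 / t)^2 \<le> R^2 * 2^2"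
    by (intro mult_left_mono) simp_all
  then have "(R / t)^2 \<le> 4 * R^2"
    by (simp add: power_divide)
  moreover have "exp (-1) / (m * (1 - t^2) / 2) * (1 / t) ^ n
      \<le> exp (-1) / (m * (1 - t^2) / 2) * (exp 1 * real n * (1 - t^2))"
    using n m one_plus_inverse_power_le[OF n] by (intro mult_left_mono) (auto simp: inv_t gap)
  moreover have "exp (-1) / (m * g / 2) * (exp 1 * real n * g) = 2 * real n / m" if "g \<noteq> 0" for g
    using m that by (simp add: exp_minus field_simps)
  moreover have "1 - t^2 \<noteq> 0"
    by (simp add: gap)
  ultimately show ?thesis
    by (smt (verit) zero_le_power2)
qed

theorem lemma22:
  fixes U :: "'a::euclidean_space \<Rightarrow> real" and G :: "'a \<Rightarrow> 'a"
    and L m R :: real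
  assumes grad: "\<And>x. (U has_derivative (\<lambda>h. G x \<bullet> h)) (at x)"
    and cont: "continuous_on UNIV G"
    and L_pos: "L > 0"
    and lip: "\<And>x y. norm (G x - G y) \<le> L * norm (x - y)"
    and G0: "G 0 = 0"
    and m_pos: "m > 0" and R_pos: "R > 0"
    and convex_outside: "\<And>x y. norm (x - y) > R \<Longrightarrow>
                 (G x - G y) \<bullet> (x - y) \<ge> m * (norm (x - y))^2"
  shows "prob_space (gibbs U) \<and> integrable (gibbs U) (\<lambda>x. (norm x)^2) \<and>
         (\<integral>x. (norm x)^2 \<partial>gibbs U) \<le> 2 * real DIM('a) / m + 18 * R^2"
proof -
  define t where "t = real DIM('a) / (real DIM('a) + 1)"
  define a where "a = m * (1 - t^2) / 2"
  have t: "0 < t" "t < 1"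
    by (simp_all add: t_def)
  then have a: "0 < a"
    using m_pos by (simp add: a_def power_less_one_iff)
  have U_cont: "continuous_on UNIV U"
    using grad has_derivative_continuous continuous_at_imp_continuous_on by blast
  then have [measurable]: "U \<in> borel_measurable borel"
    by (rule borel_measurable_continuous_onI)
  have decay: "exp (- U x) \<le> exp (- a * (norm x)^2) * exp (- U (t *\<^sub>R x))" if "R / t < norm x" for x
    using exp_neg_potential_decay_along_rays[OF grad _ _ _ that] convex_outside[of _ 0] t
    by (simp add: G0 a_def)
  have integrable: "integrable lborel (\<lambda>x. exp (- U x))"
    using t a decay by (intro integrable_if_gaussian_decay_along_rays[of _ t a "R / t"])
      (auto intro!: continuous_intros U_cont)
  have "(\<integral>\<^sup>+x. ennreal ((norm x)^2 * exp (- U x)) \<partial>lborel)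
      \<le> ennreal ((R / t)^2 + exp (-1) / a * (1 / t) ^ DIM('a)) * (\<integral>\<^sup>+x. exp (- U x) \<partial>lborel)"
    using t a decay by (intro nn_integral_norm_sq_le_if_gaussian_decay_along_rays) auto
  then have "integrable (gibbs U) (\<lambda>x. (norm x)^2)
      \<and> (\<integral>x. (norm x)^2 \<partial>gibbs U) \<le> (R / t)^2 + exp (-1) / a * (1 / t) ^ DIM('a)"
    using t a integrable by (intro gibbs_integral_le) auto
  moreover have "(R / t)^2 + exp (-1) / a * (1 / t) ^ DIM('a) \<le> 2 * real DIM('a) / m + 18 * R^2"
    unfolding a_def t_def using m_pos by (intro second_moment_constant_le) (simp add: Suc_leI)
  ultimately show ?thesis
    using prob_space_gibbs[OF _ integrable] by auto
qed

end
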